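(* $\oplus_{tot}\mathsf{P}=\oplus\mathsf{P}$.
   Context: An NPTM is a non-deterministic polynomial-time Turing machine. For an NPTM $M$ and input $x$, $acc_M(x)$ is the number of accepting paths of $M$ on $x$ and $tot_M(x)$ is the number of all computation paths of $M$ on $x$ minus $1$. $\#\mathsf{P}=\{acc_M\}$, $\mathsf{TotP}=\{tot_M\}$ over all NPTMs $M$. $\oplus\mathsf{P}$ is the class of languages $L$ for which there is $f\in\#\mathsf{P}$ with $x\in L\iff f(x)$ is odd. $\oplus_{tot}\mathsf{P}$ is defined identically with $f\in\mathsf{TotP}$. *)

theory Defs
  imports Main
begin

text \<open>States and tape symbols are natural numbers below nst / nsym; symbol 0 is the
 blank, input bits False/True are written as symbols 1/2.  The transition
 relation maps (state, scanned symbol) to the list of distinct possible moves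
 (new state, written symbol, head direction).  A configuration without any
 possible move is halting; it is accepting iff its state is accst.\<close>

datatype dir = MoveL | MoveR | Stay

record ntm =
  nst :: nat
  nsym :: nat
  start :: nat
  accst :: nat
  delta :: "nat \<Rightarrow> nat \<Rightarrow> (nat \<times> nat \<times> dir) list"

type_synonym conf = "nat \<times> (int \<Rightarrow> nat) \<times> int"

definition move :: "dir \<Rightarrow> int" where
  "move d = (case d of MoveL \<Rightarrow> -1 | MoveR \<Rightarrow> 1 | Stay \<Rightarrow> 0)"

definition enc :: "bool \<Rightarrow> nat" where
  "enc b = (if b then 2 else 1)"

definition wf_ntm :: "ntm \<Rightarrow> bool" where
  "wf_ntm M \<longleftrightarrow> 3 \<le> nsym M \<and> start M < nst M \<and> accst M < nst M \<and>
     (\<forall>q a. (nst M \<le> q \<or> nsym M \<le> a) \<longrightarrow> delta M q a = []) \<and>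
     (\<forall>q a. distinct (delta M q a) \<and>
        (\<forall>(q', b, d) \<in> set (delta M q a). q' < nst M \<and> b < nsym M))"

definition init :: "ntm \<Rightarrow> bool list \<Rightarrow> conf" where
  "init M x = (start M, (\<lambda>i. if 0 \<le> i \<and> nat i < length x then enc (x ! nat i) else 0), 0)"

definition succs :: "ntm \<Rightarrow> conf \<Rightarrow> conf list" where
  "succs M c = (case c of (q, t, h) \<Rightarrow>
     map (\<lambda>(q', b, d). (q', t(h := b), h + move d)) (delta M q (t h)))"

fun halts_within :: "ntm \<Rightarrow> nat \<Rightarrow> conf \<Rightarrow> bool" where
  "halts_within M 0 c = (succs M c = [])"
| "halts_within M (Suc n) c = (succs M c = [] \<or> (\<forall>c' \<in> set (succs M c). halts_within M n c'))"

fun leaves :: "ntm \<Rightarrow> nat \<Rightarrow> conf \<Rightarrow> nat" where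
  "leaves M 0 c = 1"
| "leaves M (Suc n) c = (if succs M c = [] then 1 else sum_list (map (leaves M n) (succs M c)))"

fun accleaves :: "ntm \<Rightarrow> nat \<Rightarrow> conf \<Rightarrow> nat" where
  "accleaves M 0 c = (if fst c = accst M then 1 else 0)"
| "accleaves M (Suc n) c = (if succs M c = [] then (if fst c = accst M then 1 else 0)
      else sum_list (map (accleaves M n) (succs M c)))"

definition nptm :: "ntm \<Rightarrow> bool" where
  "nptm M \<longleftrightarrow> wf_ntm M \<and> (\<exists>k. \<forall>x. halts_within M (length x ^ k + k) (init M x))"

definition halt_time :: "ntm \<Rightarrow> bool list \<Rightarrow> nat" where
  "halt_time M x = (LEAST n. halts_within M n (init M x))"

definition acc :: "ntm \<Rightarrow> bool list \<Rightarrow> nat" where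
  "acc M x = accleaves M (halt_time M x) (init M x)"

definition tot :: "ntm \<Rightarrow> bool list \<Rightarrow> nat" where
  "tot M x = leaves M (halt_time M x) (init M x) - 1"

definition SharpP :: "(bool list \<Rightarrow> nat) set" where
  "SharpP = {f. \<exists>M. nptm M \<and> f = acc M}"

definition TotP :: "(bool list \<Rightarrow> nat) set" where
  "TotP = {f. \<exists>M. nptm M \<and> f = tot M}"

definition ParityP :: "bool list set set" where
  "ParityP = {L. \<exists>f \<in> SharpP. \<forall>x. x \<in> L \<longleftrightarrow> odd (f x)}"

definition ParityTotP :: "bool list set set" where
  "ParityTotP = {L. \<exists>f \<in> TotP. \<forall>x. x \<in> L \<longleftrightarrow> odd (f x)}"

end

theory Submission
  imports Defs
begin

text \<open>Both inclusions come from grafting a gadget onto every halting configuration of an NPTM M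
 and adding one extra path at the start.  If every leaf of M gets a single accepting child, the
 new machine has tot M + 2 accepting paths.  If every rejecting leaf of M is split into two, the
 new machine has 2 (tot M + 1) - acc M + 1 paths, so its tot value has the parity of acc M.\<close>

definition valid_conf :: "ntm \<Rightarrow> conf \<Rightarrow> bool" where
  "valid_conf M c \<longleftrightarrow> fst c < nst M \<and> (\<forall>i. fst (snd c) i < nsym M)"

lemma valid_conf_init: "wf_ntm M \<Longrightarrow> valid_conf M (init M x)"
  by (auto simp: valid_conf_def init_def wf_ntm_def enc_def)

lemma valid_conf_succs:
  assumes "wf_ntm M" "valid_conf M c" "c' \<in> set (succs M c)"
  shows "valid_conf M c'"
proof -
  obtain q t h where c: "c = (q, t, h)" by (cases c)
  from assms(3) obtain q' b d where step: "(q', b, d) \<in> set (delta M q (t h))"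
    and c': "c' = (q', t(h := b), h + move d)"
    by (auto simp: succs_def c)
  have "q' < nst M" "b < nsym M" using assms(1) step unfolding wf_ntm_def by fastforce+
  then show ?thesis using assms(2) by (auto simp: valid_conf_def c c')
qed

lemma halts_within_halted: "succs M c = [] \<Longrightarrow> halts_within M n c"
  by (cases n) auto

lemma halts_within_mono: "halts_within M n c \<Longrightarrow> n \<le> m \<Longrightarrow> halts_within M m c"
proof (induction n arbitrary: m c)
  case 0
  then show ?case by (auto intro: halts_within_halted)
next
  case (Suc n)
  then show ?case by (cases m) auto
qed

fun leafsum :: "ntm \<Rightarrow> nat \<Rightarrow> (conf \<Rightarrow> nat) \<Rightarrow> conf \<Rightarrow> nat" where
  "leafsum M 0 g c = g c"
| "leafsum M (Suc n) g c = (if succs M c = [] then g c else sum_list (map (leafsum M n g) (succs M c)))"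

lemma leaves_eq_leafsum: "leaves M n c = leafsum M n (\<lambda>_. 1) c"
  by (induction n arbitrary: c) (simp_all cong: map_cong)

lemma accleaves_eq_leafsum:
  "accleaves M n c = leafsum M n (\<lambda>c. if fst c = accst M then 1 else 0) c"
  by (induction n arbitrary: c) (simp_all cong: map_cong)

lemma leafsum_halted: "succs M c = [] \<Longrightarrow> leafsum M n g c = g c"
  by (cases n) auto

lemma leafsum_add: "leafsum M n (\<lambda>c. g c + h c) c = leafsum M n g c + leafsum M n h c"
  by (induction n arbitrary: c) (simp_all add: sum_list_addf cong: map_cong)

lemma leafsum_mult: "leafsum M n (\<lambda>c. k * g c) c = k * leafsum M n g c"
  by (induction n arbitrary: c) (simp_all add: sum_list_const_mult cong: map_cong)

lemma leafsum_pos: "(\<And>c. 0 < g c) \<Longrightarrow> 0 < leafsum M n g c"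
proof (induction n arbitrary: c)
  case (Suc n)
  then show ?case by (cases "succs M c") (auto simp: add_pos_nonneg)
qed simp

lemma leafsum_stable:
  "halts_within M n c \<Longrightarrow> n \<le> m \<Longrightarrow> leafsum M m g c = leafsum M n g c"
proof (induction n arbitrary: m c)
  case 0
  then show ?case by (simp add: leafsum_halted)
next
  case (Suc n)
  then obtain m' where m: "m = Suc m'" "n \<le> m'" by (cases m) auto
  show ?case
  proof (cases "succs M c = []")
    case False
    have "leafsum M m' g c' = leafsum M n g c'" if "c' \<in> set (succs M c)" for c'
      using Suc.prems(1) False that Suc.IH[OF _ m(2)] by simp
    with False show ?thesis by (simp add: m(1) cong: map_cong)
  qed (simp add: m(1))
qed

lemma leafsum_cong_halted:
  assumes "wf_ntm M" "valid_conf M c" "halts_within M n c"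
    and "\<And>c. valid_conf M c \<Longrightarrow> succs M c = [] \<Longrightarrow> g c = h c"
  shows "leafsum M n g c = leafsum M n h c"
  using assms(2,3)
proof (induction n arbitrary: c)
  case (Suc n)
  show ?case
  proof (cases "succs M c = []")
    case False
    with Suc have "leafsum M n g c' = leafsum M n h c'" if "c' \<in> set (succs M c)" for c'
      using that valid_conf_succs[OF assms(1)] by simp
    with False show ?thesis by (simp cong: map_cong)
  qed (use Suc.prems assms(4) in simp)
qed (use assms(4) in simp)

lemma halts_within_halt_time: "nptm M \<Longrightarrow> halts_within M (halt_time M x) (init M x)"
  unfolding nptm_def halt_time_def by (metis LeastI)

lemma leafsum_at_halt_time:
  assumes "nptm M" "halts_within M N (init M x)"
  shows "leafsum M (halt_time M x) g (init M x) = leafsum M N g (init M x)"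
proof -
  have "halt_time M x \<le> N" using assms(2) unfolding halt_time_def by (rule Least_le)
  from leafsum_stable[OF halts_within_halt_time[OF assms(1)] this] show ?thesis by (rule sym)
qed

text \<open>The machine graft M f a runs M but, whenever M halts in a state q scanning s, continues
 with the moves f q s (if any), all of which enter the fresh halting state nst M.  A fresh start state
 Suc (nst M) first branches into the start of M and into nst M, adding one extra path.\<close>
definition graft :: "ntm \<Rightarrow> (nat \<Rightarrow> nat \<Rightarrow> (nat \<times> nat \<times> dir) list) \<Rightarrow> nat \<Rightarrow> ntm" where
  "graft M f a = \<lparr>nst = nst M + 2, nsym = nsym M, start = Suc (nst M), accst = a,
     delta = (\<lambda>q s. if q < nst M \<and> s < nsym M then (if delta M q s = [] then f q s else delta M q s)
        else if q = Suc (nst M) \<and> s < nsym M then [(start M, s, Stay), (nst M, s, Stay)] else [])\<rparr>"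

definition leaf_gadget :: "ntm \<Rightarrow> (nat \<Rightarrow> nat \<Rightarrow> (nat \<times> nat \<times> dir) list) \<Rightarrow> bool" where
  "leaf_gadget M f \<longleftrightarrow> (\<forall>q s. distinct (f q s) \<and>
     (\<forall>(q', b, d) \<in> set (f q s). q' = nst M \<and> (s < nsym M \<longrightarrow> b < nsym M)))"

lemma graft_simps:
  "nst (graft M f a) = nst M + 2" "nsym (graft M f a) = nsym M"
  "start (graft M f a) = Suc (nst M)" "accst (graft M f a) = a"
  by (simp_all add: graft_def)

lemma leaf_gadget_moves:
  "leaf_gadget M f \<Longrightarrow> (q', b, d) \<in> set (f q s) \<Longrightarrow> q' = nst M \<and> (s < nsym M \<longrightarrow> b < nsym M)"
  unfolding leaf_gadget_def by fastforce

lemma wf_graft: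
  assumes "wf_ntm M" "leaf_gadget M f" "a < nst M + 2"
  shows "wf_ntm (graft M f a)"
proof -
  have "start M < nst M" using assms(1) by (simp add: wf_ntm_def)
  have M_moves: "q' < nst M \<and> b < nsym M" if "(q', b, d) \<in> set (delta M q s)" for q s q' b d
    using assms(1) that unfolding wf_ntm_def by fastforce
  have moves: "q' < nst M + 2 \<and> b < nsym M"
    if "(q', b, d) \<in> set (delta (graft M f a) q s)" for q s q' b d
    using that \<open>start M < nst M\<close> unfolding graft_def
    by (auto split: if_splits dest: M_moves leaf_gadget_moves[OF assms(2)])
  have "distinct (delta (graft M f a) q s)" for q s
    using assms(1,2) unfolding wf_ntm_def leaf_gadget_def by (simp add: graft_def)
  moreover have "delta (graft M f a) q s = []" if "nst M + 2 \<le> q \<or> nsym M \<le> s" for q s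
    using that by (auto simp: graft_def)
  moreover have "3 \<le> nsym M" using assms(1) by (simp add: wf_ntm_def)
  moreover note graft_simps
  ultimately show ?thesis
    using moves assms(3) unfolding wf_ntm_def by fastforce
qed

lemma succs_graft_dead: "succs (graft M f a) (nst M, t, h) = []"
  by (simp add: succs_def graft_def)

lemma succs_graft_running:
  "valid_conf M c \<Longrightarrow> succs M c \<noteq> [] \<Longrightarrow> succs (graft M f a) c = succs M c"
  by (cases c) (auto simp: valid_conf_def succs_def graft_def)

lemma succs_graft_halted:
  "valid_conf M (q, t, h) \<Longrightarrow> succs M (q, t, h) = [] \<Longrightarrow>
    succs (graft M f a) (q, t, h) = map (\<lambda>(q', b, d). (q', t(h := b), h + move d)) (f q (t h))"
  by (auto simp: valid_conf_def succs_def graft_def)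

lemma succs_graft_init:
  assumes "wf_ntm M"
  shows "succs (graft M f a) (init (graft M f a) x) = [init M x, (nst M, fst (snd (init M x)), 0)]"
proof -
  have "fst (snd (init M x)) 0 < nsym M" using valid_conf_init[OF assms] by (simp add: valid_conf_def)
  then show ?thesis by (simp add: init_def graft_def succs_def move_def fun_eq_iff)
qed

lemma halts_within_graft_halted:
  assumes "leaf_gadget M f" "valid_conf M c" "succs M c = []"
  shows "halts_within (graft M f a) 1 c"
proof -
  obtain q t h where c: "c = (q, t, h)" by (cases c)
  have "succs (graft M f a) c' = []" if "c' \<in> set (succs (graft M f a) c)" for c'
  proof -
    from that assms(2,3) obtain q' b d where move: "(q', b, d) \<in> set (f q (t h))"
      and c': "c' = (q', t(h := b), h + move d)"
      by (auto simp: c succs_graft_halted)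
    have "q' = nst M" using leaf_gadget_moves[OF assms(1) move] by simp
    then show ?thesis by (simp add: c' succs_graft_dead)
  qed
  then show ?thesis by simp
qed

lemma halts_within_graft:
  assumes "wf_ntm M" "leaf_gadget M f" "valid_conf M c" "halts_within M n c"
  shows "halts_within (graft M f a) (Suc n) c"
  using assms(3,4)
proof (induction n arbitrary: c)
  case (0 c)
  then show ?case using halts_within_graft_halted[OF assms(2)] by simp
next
  case (Suc n c)
  show ?case
  proof (cases "succs M c = []")
    case True
    have "halts_within (graft M f a) 1 c"
      by (rule halts_within_graft_halted[OF assms(2) Suc.prems(1) True])
    then show ?thesis by (rule halts_within_mono) simp
  next
    case False
    have "halts_within (graft M f a) (Suc n) c'" if "c' \<in> set (succs M c)" for c'
    proof -
      from Suc.prems(2) False that have "halts_within M n c'" by simp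
      with Suc.IH Suc.prems(1) that show ?thesis by (simp add: valid_conf_succs[OF assms(1)])
    qed
    then show ?thesis
      unfolding halts_within.simps(2) succs_graft_running[OF Suc.prems(1) False] by blast
  qed
qed

lemma leafsum_graft:
  assumes "wf_ntm M" "leaf_gadget M f" "valid_conf M c" "halts_within M n c"
  shows "leafsum (graft M f a) (Suc n) g c = leafsum M n (leafsum (graft M f a) 1 g) c"
  using assms(3,4)
proof (induction n arbitrary: c)
  case (0 c)
  then have "succs M c = []" by simp
  then show ?case by simp
next
  case (Suc n c)
  show ?case
  proof (cases "succs M c = []")
    case True
    have "leafsum (graft M f a) (Suc (Suc n)) g c = leafsum (graft M f a) 1 g c"
      by (rule leafsum_stable[OF halts_within_graft_halted[OF assms(2) Suc.prems(1) True]]) simp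
    with True show ?thesis by (simp only: leafsum_halted)
  next
    case False
    have "leafsum (graft M f a) (Suc n) g c' = leafsum M n (leafsum (graft M f a) 1 g) c'"
      if "c' \<in> set (succs M c)" for c'
      using Suc that False valid_conf_succs[OF assms(1)] by (simp del: leafsum.simps)
    then have "sum_list (map (leafsum (graft M f a) (Suc n) g) (succs M c)) =
        sum_list (map (leafsum M n (leafsum (graft M f a) 1 g)) (succs M c))"
      by (simp del: leafsum.simps cong: map_cong)
    with False show ?thesis
      by (simp only: leafsum.simps(2) succs_graft_running[OF Suc.prems(1) False] if_False)
  qed
qed

lemma halts_within_graft_init:
  assumes "wf_ntm M" "halts_within (graft M f a) n (init M x)"
  shows "halts_within (graft M f a) (Suc n) (init (graft M f a) x)"
  using assms by (simp add: succs_graft_init halts_within_halted succs_graft_dead)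

lemma leafsum_graft_init:
  assumes "wf_ntm M"
  shows "leafsum (graft M f a) (Suc n) g (init (graft M f a) x) =
    leafsum (graft M f a) n g (init M x) + g (nst M, fst (snd (init M x)), 0)"
  using assms by (simp add: succs_graft_init leafsum_halted succs_graft_dead)

lemma nptm_graft:
  assumes "nptm M" "leaf_gadget M f" "a < nst M + 2"
  shows "nptm (graft M f a)"
proof -
  have wf: "wf_ntm M" using assms(1) by (simp add: nptm_def)
  obtain k where k: "\<And>x. halts_within M (length x ^ k + k) (init M x)"
    using assms(1) by (auto simp: nptm_def)
  have "halts_within (graft M f a) (length x ^ (k + 3) + (k + 3)) (init (graft M f a) x)" for x
  proof -
    have halts: "halts_within (graft M f a) (Suc (Suc (length x ^ k + k))) (init (graft M f a) x)"
      using halts_within_graft_init[OF wf halts_within_graft[OF wf assms(2) valid_conf_init[OF wf] k]] .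
    have "length x ^ k \<le> Suc (length x ^ (k + 3))"
      by (cases "length x") (auto simp: le_SucI power_increasing power_0_left)
    then show ?thesis by (intro halts_within_mono[OF halts]) linarith
  qed
  then show ?thesis using wf_graft[OF wf assms(2,3)] by (auto simp: nptm_def)
qed

lemma leafsum_graft_halt_time:
  assumes "nptm M" "leaf_gadget M f" "a < nst M + 2"
    and "\<And>c. valid_conf M c \<Longrightarrow> succs M c = [] \<Longrightarrow> leafsum (graft M f a) 1 g c = g' c"
  shows "leafsum (graft M f a) (halt_time (graft M f a) x) g (init (graft M f a) x) =
    leafsum M (halt_time M x) g' (init M x) + g (nst M, fst (snd (init M x)), 0)"
proof -
  have wf: "wf_ntm M" using assms(1) by (simp add: nptm_def)
  define N where "N = halt_time M x"
  have halts: "halts_within M N (init M x)"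
    unfolding N_def by (rule halts_within_halt_time[OF assms(1)])
  note valid = valid_conf_init[OF wf]
  have "halts_within (graft M f a) (Suc (Suc N)) (init (graft M f a) x)"
    by (rule halts_within_graft_init[OF wf halts_within_graft[OF wf assms(2) valid halts]])
  then have "leafsum (graft M f a) (halt_time (graft M f a) x) g (init (graft M f a) x) =
      leafsum (graft M f a) (Suc (Suc N)) g (init (graft M f a) x)"
    by (rule leafsum_at_halt_time[OF nptm_graft[OF assms(1-3)]])
  also have "\<dots> = leafsum (graft M f a) (Suc N) g (init M x) + g (nst M, fst (snd (init M x)), 0)"
    by (rule leafsum_graft_init[OF wf])
  also have "leafsum (graft M f a) (Suc N) g (init M x) = leafsum M N (leafsum (graft M f a) 1 g) (init M x)"
    by (rule leafsum_graft[OF wf assms(2) valid halts])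
  also have "\<dots> = leafsum M N g' (init M x)"
    by (rule leafsum_cong_halted[OF wf valid halts assms(4)])
  finally show ?thesis unfolding N_def .
qed

definition accept_all_leaves :: "ntm \<Rightarrow> ntm" where
  "accept_all_leaves M = graft M (\<lambda>_ s. [(nst M, s, Stay)]) (nst M)"

text \<open>The two moves of the gadget differ only in the head direction, which keeps the move list
 distinct as wf_ntm demands.\<close>
definition split_rejecting_leaves :: "ntm \<Rightarrow> ntm" where
  "split_rejecting_leaves M = graft M
     (\<lambda>q s. if q = accst M then [] else [(nst M, s, Stay), (nst M, s, MoveL)]) (accst M)"

lemma
  assumes "nptm M"
  shows nptm_accept_all_leaves: "nptm (accept_all_leaves M)"
    and acc_accept_all_leaves: "acc (accept_all_leaves M) x = tot M x + 2"
proof -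
  have gadget: "leaf_gadget M (\<lambda>_ s. [(nst M, s, Stay)])" by (simp add: leaf_gadget_def)
  then show "nptm (accept_all_leaves M)"
    unfolding accept_all_leaves_def by (rule nptm_graft[OF assms]) simp
  have "acc (accept_all_leaves M) x = leafsum M (halt_time M x) (\<lambda>_. 1) (init M x) + 1"
    unfolding acc_def accleaves_eq_leafsum accept_all_leaves_def
    by (subst leafsum_graft_halt_time[OF assms gadget])
      (auto simp: graft_simps succs_graft_halted)
  moreover have "0 < leafsum M (halt_time M x) (\<lambda>_. 1) (init M x)" by (rule leafsum_pos) simp
  ultimately show "acc (accept_all_leaves M) x = tot M x + 2"
    by (simp add: tot_def leaves_eq_leafsum)
qed

lemma
  assumes "nptm M"
  shows nptm_split_rejecting_leaves: "nptm (split_rejecting_leaves M)"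
    and tot_split_rejecting_leaves: "tot (split_rejecting_leaves M) x + acc M x = 2 * (tot M x + 1)"
proof -
  let ?f = "\<lambda>q s. if q = accst M then [] else [(nst M, s, Stay), (nst M, s, MoveL)]"
  let ?accepting = "\<lambda>c. if fst c = accst M then 1 else 0 :: nat"
  have gadget: "leaf_gadget M ?f" by (simp add: leaf_gadget_def)
  have "accst M < nst M" using assms by (simp add: nptm_def wf_ntm_def)
  then show "nptm (split_rejecting_leaves M)"
    unfolding split_rejecting_leaves_def by (intro nptm_graft[OF assms gadget]) simp
  have "tot (split_rejecting_leaves M) x = leafsum M (halt_time M x) (\<lambda>c. 2 - ?accepting c) (init M x)"
    unfolding tot_def leaves_eq_leafsum split_rejecting_leaves_def
    using \<open>accst M < nst M\<close>
    by (subst leafsum_graft_halt_time[OF assms gadget]) (auto simp: succs_graft_halted)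
  moreover have "acc M x = leafsum M (halt_time M x) ?accepting (init M x)"
    by (simp add: acc_def accleaves_eq_leafsum)
  ultimately have "tot (split_rejecting_leaves M) x + acc M x =
      leafsum M (halt_time M x) (\<lambda>_. 2 * 1) (init M x)"
    by (simp add: leafsum_add[symmetric])
  also have "\<dots> = 2 * leafsum M (halt_time M x) (\<lambda>_. 1) (init M x)"
    by (rule leafsum_mult)
  also have "\<dots> = 2 * (tot M x + 1)"
    using leafsum_pos[of "\<lambda>_. 1"] by (simp add: tot_def leaves_eq_leafsum)
  finally show "tot (split_rejecting_leaves M) x + acc M x = 2 * (tot M x + 1)" .
qed

lemma ParityTotP_subset_ParityP: "ParityTotP \<subseteq> ParityP"
proof
  fix L assume "L \<in> ParityTotP"
  then obtain M where M: "nptm M" and L: "\<forall>x. x \<in> L \<longleftrightarrow> odd (tot M x)"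
    by (auto simp: ParityTotP_def TotP_def)
  have "acc (accept_all_leaves M) \<in> SharpP"
    using nptm_accept_all_leaves[OF M] by (auto simp: SharpP_def)
  moreover have "\<forall>x. x \<in> L \<longleftrightarrow> odd (acc (accept_all_leaves M) x)"
    using L by (simp add: acc_accept_all_leaves[OF M])
  ultimately show "L \<in> ParityP" unfolding ParityP_def by blast
qed

lemma ParityP_subset_ParityTotP: "ParityP \<subseteq> ParityTotP"
proof
  fix L assume "L \<in> ParityP"
  then obtain M where M: "nptm M" and L: "\<forall>x. x \<in> L \<longleftrightarrow> odd (acc M x)"
    by (auto simp: ParityP_def SharpP_def)
  have "tot (split_rejecting_leaves M) \<in> TotP"
    using nptm_split_rejecting_leaves[OF M] by (auto simp: TotP_def)
  moreover have "odd (tot (split_rejecting_leaves M) x) \<longleftrightarrow> odd (acc M x)" for x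
  proof -
    have "even (tot (split_rejecting_leaves M) x + acc M x)"
      by (simp add: tot_split_rejecting_leaves[OF M])
    then show ?thesis by simp
  qed
  ultimately show "L \<in> ParityTotP" unfolding ParityTotP_def using L by blast
qed

theorem proposition8:
  shows "ParityTotP = ParityP"
  using ParityTotP_subset_ParityP ParityP_subset_ParityTotP by (rule equalityI)

end
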